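(* Let $A$ be an integral domain and $E$ an $A$-module such that $aE=a^2E$ for each $a\in A$. Then: (1) if $E$ is torsion-free, then $E$ is divisible; (2) if $A$ is local and $E$ is finitely generated, then $E$ is semisimple; (3) if $A$ is an Archimedean valuation domain, then $E$ is an extension of a divisible module by a semisimple module (i.e. $E$ has a divisible submodule $D$ with $E/D$ semisimple).
   Context: $E$ is divisible if $sE=E$ for every non-zero $s\in A$. A valuation domain is Archimedean if its maximal ideal is its only non-zero prime ideal. *)

theory Defs
  imports Complex_Main
begin

definition is_ideal :: "'a::comm_ring_1 set \<Rightarrow> bool" where
  "is_ideal I \<longleftrightarrow> 0 \<in> I \<and> (\<forall>x\<in>I. \<forall>y\<in>I. x + y \<in> I) \<and> (\<forall>a. \<forall>x\<in>I. a * x \<in> I)"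

definition prime_ideal :: "'a::comm_ring_1 set \<Rightarrow> bool" where
  "prime_ideal P \<longleftrightarrow> is_ideal P \<and> 1 \<notin> P \<and> (\<forall>a b. a * b \<in> P \<longrightarrow> a \<in> P \<or> b \<in> P)"

definition maximal_ideal :: "'a::comm_ring_1 set \<Rightarrow> bool" where
  "maximal_ideal M \<longleftrightarrow> is_ideal M \<and> 1 \<notin> M \<and>
     (\<forall>J. is_ideal J \<and> M \<subseteq> J \<longrightarrow> J = M \<or> J = UNIV)"

definition local_ring :: "'a::comm_ring_1 itself \<Rightarrow> bool" where
  "local_ring _ \<longleftrightarrow> (\<exists>!M::'a set. maximal_ideal M)"

definition valuation_domain :: "'a::idom itself \<Rightarrow> bool" where
  "valuation_domain _ \<longleftrightarrow> (\<forall>a b::'a. a dvd b \<or> b dvd a)"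

definition archimedean_valuation_domain :: "'a::idom itself \<Rightarrow> bool" where
  "archimedean_valuation_domain T \<longleftrightarrow> valuation_domain T \<and>
     (\<forall>P::'a set. prime_ideal P \<and> P \<noteq> {0} \<longrightarrow> maximal_ideal P)"

definition torsion_free :: "('a::comm_ring_1 \<Rightarrow> 'b::ab_group_add \<Rightarrow> 'b) \<Rightarrow> bool" where
  "torsion_free scale \<longleftrightarrow> (\<forall>s x. scale s x = 0 \<longrightarrow> s = 0 \<or> x = 0)"

definition submodule :: "('a::comm_ring_1 \<Rightarrow> 'b::ab_group_add \<Rightarrow> 'b) \<Rightarrow> 'b set \<Rightarrow> bool" where
  "submodule scale S \<longleftrightarrow> module.subspace scale S"

definition divisible_on :: "('a::comm_ring_1 \<Rightarrow> 'b::ab_group_add \<Rightarrow> 'b) \<Rightarrow> 'b set \<Rightarrow> bool" where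
  "divisible_on scale D \<longleftrightarrow> (\<forall>s. s \<noteq> 0 \<longrightarrow> scale s ` D = D)"

definition divisible :: "('a::comm_ring_1 \<Rightarrow> 'b::ab_group_add \<Rightarrow> 'b) \<Rightarrow> bool" where
  "divisible scale \<longleftrightarrow> divisible_on scale UNIV"

definition fin_gen :: "('a::comm_ring_1 \<Rightarrow> 'b::ab_group_add \<Rightarrow> 'b) \<Rightarrow> bool" where
  "fin_gen scale \<longleftrightarrow> (\<exists>F. finite F \<and> module.span scale F = UNIV)"

definition semisimple :: "('a::comm_ring_1 \<Rightarrow> 'b::ab_group_add \<Rightarrow> 'b) \<Rightarrow> bool" where
  "semisimple scale \<longleftrightarrow> (\<forall>S. submodule scale S \<longrightarrow>
     (\<exists>T. submodule scale T \<and> S \<inter> T = {0} \<and> {s + t |s t. s \<in> S \<and> t \<in> T} = UNIV))"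

(* E/D semisimple, expressed through the correspondence between submodules of E/D
   and submodules of E containing D: every submodule S/D of E/D is a direct summand *)
definition semisimple_quotient :: "('a::comm_ring_1 \<Rightarrow> 'b::ab_group_add \<Rightarrow> 'b) \<Rightarrow> 'b set \<Rightarrow> bool" where
  "semisimple_quotient scale D \<longleftrightarrow> (\<forall>S. submodule scale S \<and> D \<subseteq> S \<longrightarrow>
     (\<exists>T. submodule scale T \<and> D \<subseteq> T \<and> S \<inter> T = D \<and>
          {s + t |s t. s \<in> S \<and> t \<in> T} = UNIV))"

end

theory Submission
  imports Defs
begin

(* If every non-unit maps E into a submodule D, then E/D is in effect a vector space over the
   residue field, so by Zorn every submodule containing D has a complement modulo D.
   (1) From s x = s^2 y we get s (x - s y) = 0, hence x = s y.
   (2) Over a local ring a non-unit a lies in the Jacobson radical, and aE = a (aE) with aE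
   finitely generated, so aE = 0 by Nakayama; take D = 0.
   (3) In an Archimedean valuation domain a nonzero non-unit a divides some power of every
   non-unit b (otherwise the elements divisible by all powers of b would form a nonzero prime
   ideal that is not maximal), while bE = b^(n+1) E for all n. So all nonzero
   non-units a give the same submodule D = aE, and sD = (s a) E = D shows D divisible. *)

context module
begin

lemma subspace_Union_chain:
  assumes "C \<noteq> {}" and "subset.chain A C" and "\<And>X. X \<in> A \<Longrightarrow> subspace X"
  shows "subspace (\<Union>C)"
proof (rule subspaceI)
  have sub: "subspace X" if "X \<in> C" for X
    using assms(2,3) that by (auto simp: subset_chain_def)
  show "0 \<in> \<Union>C"
    using assms(1) sub subspace_0 by blast
  show "x + y \<in> \<Union>C" if xy: "x \<in> \<Union>C" "y \<in> \<Union>C" for x y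
  proof -
    obtain X Y where XY: "X \<in> C" "Y \<in> C" "x \<in> X" "y \<in> Y"
      using xy by blast
    then have "X \<subseteq> Y \<or> Y \<subseteq> X"
      using assms(2) by (auto simp: subset_chain_def)
    then show ?thesis
      using XY sub subspace_add by blast
  qed
  show "c *s x \<in> \<Union>C" if "x \<in> \<Union>C" for c x
    using that sub subspace_scale by blast
qed

lemma ex_maximal_subspace_Int_eq:
  assumes "subspace D" "subspace S" "D \<subseteq> S"
  obtains T where "subspace T" "D \<subseteq> T" "S \<inter> T = D"
    "\<And>T'. subspace T' \<Longrightarrow> T \<subseteq> T' \<Longrightarrow> S \<inter> T' = D \<Longrightarrow> T' = T"
proof -
  define A where "A = {T. subspace T \<and> D \<subseteq> T \<and> S \<inter> T = D}"
  have "D \<in> A"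
    using assms unfolding A_def by blast
  moreover have "\<Union>C \<in> A" if "C \<noteq> {}" "subset.chain A C" for C
  proof -
    have "subspace (\<Union>C)"
      using subspace_Union_chain[OF that] unfolding A_def by blast
    moreover have "D \<subseteq> X" "S \<inter> X = D" if "X \<in> C" for X
      using \<open>subset.chain A C\<close> that unfolding subset_chain_def A_def by blast+
    ultimately show ?thesis
      using \<open>C \<noteq> {}\<close> unfolding A_def by blast
  qed
  ultimately obtain T where T: "T \<in> A" and maximal: "\<forall>X\<in>A. T \<subseteq> X \<longrightarrow> X = T"
    using subset_Zorn_nonempty[of A] by blast
  show ?thesis
  proof (rule that)
    show "subspace T" "D \<subseteq> T" "S \<inter> T = D"
      using T unfolding A_def by blast+
    show "T' = T" if "subspace T'" "T \<subseteq> T'" "S \<inter> T' = D" for T'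
      using maximal that \<open>D \<subseteq> T\<close> unfolding A_def by blast
  qed
qed

text \<open>In \<open>s = t + c x\<close>, a unit \<open>c\<close> would put \<open>x\<close> into \<open>S + T\<close>, so \<open>c\<close> is a non-unit and
  \<open>s \<in> T\<close>.\<close>
lemma Int_span_insert_eq:
  assumes nonunits: "\<And>a x. \<not> a dvd 1 \<Longrightarrow> a *s x \<in> D"
    and S: "subspace S" and T: "subspace T" "D \<subseteq> T" "S \<inter> T = D"
    and x: "x \<notin> {s + t |s t. s \<in> S \<and> t \<in> T}"
  shows "S \<inter> span (insert x T) = D"
proof
  show "D \<subseteq> S \<inter> span (insert x T)"
    using T(3) span_superset[of "insert x T"] by blast
  show "S \<inter> span (insert x T) \<subseteq> D"
  proof
    fix s assume "s \<in> S \<inter> span (insert x T)"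
    then obtain c where s: "s \<in> S" "s - c *s x \<in> T"
      using span_eq_iff[THEN iffD2, OF T(1)] by (auto simp: span_breakdown_eq)
    have "\<not> c dvd 1"
    proof
      assume "c dvd 1"
      then obtain d where d: "1 = c * d"
        by (auto elim: dvdE)
      have "d *s s + - (d *s (s - c *s x)) = (d * c) *s x"
        by (simp add: scale_right_diff_distrib)
      then have "x = d *s s + - (d *s (s - c *s x))"
        using d by (simp add: mult.commute)
      moreover have "d *s s \<in> S" "- (d *s (s - c *s x)) \<in> T"
        using s S T(1) subspace_scale subspace_neg by blast+
      ultimately show False
        using x by blast
    qed
    then have "c *s x \<in> T"
      using nonunits T(2) by blast
    then have "(s - c *s x) + c *s x \<in> T"
      using s(2) subspace_add[OF T(1)] by blast
    then have "s \<in> T"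
      by simp
    then show "s \<in> D"
      using s(1) T(3) by blast
  qed
qed

lemma sum_eq_UNIV_if_maximal_Int_eq:
  assumes nonunits: "\<And>a x. \<not> a dvd 1 \<Longrightarrow> a *s x \<in> D"
    and S: "subspace S" and T: "subspace T" "D \<subseteq> T" "S \<inter> T = D"
    and maximal: "\<And>T'. subspace T' \<Longrightarrow> T \<subseteq> T' \<Longrightarrow> S \<inter> T' = D \<Longrightarrow> T' = T"
  shows "{s + t |s t. s \<in> S \<and> t \<in> T} = UNIV"
proof (rule ccontr)
  assume "{s + t |s t. s \<in> S \<and> t \<in> T} \<noteq> UNIV"
  then obtain x where x: "x \<notin> {s + t |s t. s \<in> S \<and> t \<in> T}"
    by blast
  have "T \<subseteq> span (insert x T)"
    using span_superset[of "insert x T"] by blast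
  then have "span (insert x T) = T"
    using maximal Int_span_insert_eq[OF nonunits S T x] by blast
  then have "x \<in> T"
    using span_base[of x "insert x T"] by blast
  then have "0 + x \<in> {s + t |s t. s \<in> S \<and> t \<in> T}"
    using subspace_0[OF S] by blast
  with x show False
    by (simp only: add_0)
qed

lemma semisimple_quotient_if_nonunits_into:
  assumes "subspace D" and "\<And>a x. \<not> a dvd 1 \<Longrightarrow> a *s x \<in> D"
  shows "semisimple_quotient scale D"
  unfolding semisimple_quotient_def submodule_def
proof (intro allI impI)
  fix S assume S: "subspace S \<and> D \<subseteq> S"
  obtain T where T: "subspace T" "D \<subseteq> T" "S \<inter> T = D"
    and maximal: "\<And>T'. subspace T' \<Longrightarrow> T \<subseteq> T' \<Longrightarrow> S \<inter> T' = D \<Longrightarrow> T' = T"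
    using ex_maximal_subspace_Int_eq assms(1) S by blast
  have "{s + t |s t. s \<in> S \<and> t \<in> T} = UNIV"
    using sum_eq_UNIV_if_maximal_Int_eq[OF assms(2) _ T maximal] S by blast
  with T show "\<exists>T. subspace T \<and> D \<subseteq> T \<and> S \<inter> T = D \<and> {s + t |s t. s \<in> S \<and> t \<in> T} = UNIV"
    by blast
qed

lemma semisimple_if_nonunits_annihilate:
  assumes "\<And>a x. \<not> a dvd 1 \<Longrightarrow> a *s x = 0"
  shows "semisimple scale"
proof -
  have quotient: "semisimple_quotient scale {0}"
    using semisimple_quotient_if_nonunits_into assms by simp
  show ?thesis
    unfolding semisimple_def submodule_def
  proof (intro allI impI)
    fix S assume "subspace S"
    then have "subspace S \<and> {0} \<subseteq> S"
      using subspace_0 by blast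
    from quotient[unfolded semisimple_quotient_def submodule_def, rule_format, OF this]
    show "\<exists>T. subspace T \<and> S \<inter> T = {0} \<and> {s + t |s t. s \<in> S \<and> t \<in> T} = UNIV"
      by (elim exE conjE) (intro exI conjI; assumption)
  qed
qed

lemma nakayama:
  assumes "finite F"
    and jacobson: "\<And>c. (1 - a * c) dvd 1"
    and "span F \<subseteq> scale a ` span F"
  shows "span F = {0}"
  using assms(1,3)
proof (induction F rule: finite_induct)
  case empty
  show ?case
    by simp
next
  case (insert f F)
  obtain y where y: "y \<in> span (insert f F)" "f = a *s y"
    using insert.prems span_base[of f "insert f F"] by blast
  then obtain k where k: "y - k *s f \<in> span F"
    using span_breakdown_eq by blast
  have "(1 - a * k) *s f = a *s (y - k *s f)"
    using y(2) by (simp add: algebra_simps)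
  then have "(1 - a * k) *s f \<in> span F"
    using k span_scale by metis
  moreover obtain v where "1 = (1 - a * k) * v"
    using jacobson by (metis dvdE)
  ultimately have "f \<in> span F"
    using span_scale[of "(1 - a * k) *s f" F v] by (simp add: mult.commute)
  then have "insert f F \<subseteq> span F" "F \<subseteq> span (insert f F)"
    using span_superset by blast+
  then have "span (insert f F) = span F"
    by (simp add: span_eq)
  then show ?case
    using insert.IH insert.prems by simp
qed

lemma scale_eq_0_if_jacobson:
  assumes "finite F" "span F = UNIV"
    and "\<And>c. (1 - a * c) dvd 1"
    and "range (scale a) = range (scale (a ^ 2))"
  shows "a *s x = 0"
proof -
  have span_image: "span (scale a ` F) = range (scale a)"
    using module_hom.span_image[OF module_hom_scale_self] assms(2) by metis
  have "a *s x \<in> scale a ` range (scale a)" for x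
  proof -
    obtain y where "a *s x = (a ^ 2) *s y"
      using assms(4) by (metis rangeE rangeI)
    then have "a *s x = a *s (a *s y)"
      by (simp add: power2_eq_square)
    then show ?thesis
      by blast
  qed
  then have "range (scale a) \<subseteq> scale a ` range (scale a)"
    by blast
  then have "span (scale a ` F) = {0}"
    using nakayama[of "scale a ` F" a] assms(1,3) span_image by simp
  then show ?thesis
    using span_image by auto
qed

lemma range_scale_mult: "range (scale (b * c)) = scale b ` range (scale c)"
  by (simp add: image_image)

lemma range_scale_subset_if_dvd:
  assumes "a dvd c"
  shows "range (scale c) \<subseteq> range (scale a)"
proof -
  obtain d where "c = a * d"
    using assms by (auto elim: dvdE)
  then show ?thesis
    using range_scale_mult by auto
qed

lemma range_scale_power_eq:
  assumes sq: "\<And>a. range (scale a) = range (scale (a ^ 2))"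
  shows "range (scale (b ^ Suc n)) = range (scale b)"
proof (induction n)
  case 0
  show ?case
    by simp
next
  case (Suc n)
  have "range (scale (b ^ Suc (Suc n))) = scale (b ^ n) ` range (scale (b ^ 2))"
    by (simp add: range_scale_mult[symmetric] power_add[symmetric])
  also have "\<dots> = scale (b ^ n) ` range (scale b)"
    by (simp add: sq[of b, symmetric])
  also have "\<dots> = range (scale (b ^ Suc n))"
    by (simp add: range_scale_mult[symmetric] mult.commute)
  finally show ?case
    using Suc.IH by simp
qed

lemma range_scale_subset_if_dvd_power:
  assumes "\<And>a. range (scale a) = range (scale (a ^ 2))" and "a dvd b ^ n"
  shows "range (scale b) \<subseteq> range (scale a)"
proof -
  have "range (scale b) = range (scale (b ^ Suc n))"
    using range_scale_power_eq[OF assms(1)] by simp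
  also have "\<dots> \<subseteq> range (scale (b ^ n))"
    by (rule range_scale_subset_if_dvd) simp
  also have "\<dots> \<subseteq> range (scale a)"
    by (rule range_scale_subset_if_dvd) fact
  finally show ?thesis .
qed

end

interpretation ideal: module "(*) :: 'a::comm_ring_1 \<Rightarrow> 'a \<Rightarrow> 'a"
  by unfold_locales (simp_all add: algebra_simps)

lemma is_ideal_iff_subspace: "is_ideal I \<longleftrightarrow> ideal.subspace I"
  unfolding is_ideal_def ideal.subspace_def ..

lemma ex_maximal_ideal_mem:
  fixes a :: "'a::comm_ring_1"
  assumes "\<not> a dvd 1"
  shows "\<exists>M. maximal_ideal M \<and> a \<in> M"
proof -
  define A where "A = {I::'a set. ideal.subspace I \<and> 1 \<notin> I \<and> a \<in> I}"
  have "1 \<notin> ideal.span {a}"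
    using assms by (auto simp: ideal.span_singleton) (metis dvd_triv_right)
  then have "ideal.span {a} \<in> A"
    unfolding A_def by (simp add: ideal.span_base)
  moreover have "\<Union>C \<in> A" if "C \<noteq> {}" "subset.chain A C" for C
  proof -
    have "ideal.subspace (\<Union>C)"
      using ideal.subspace_Union_chain[OF that] unfolding A_def by blast
    moreover have "1 \<notin> X" "a \<in> X" if "X \<in> C" for X
      using \<open>subset.chain A C\<close> that unfolding subset_chain_def A_def by blast+
    ultimately show ?thesis
      using \<open>C \<noteq> {}\<close> unfolding A_def by blast
  qed
  ultimately obtain M where M: "M \<in> A" and maximal: "\<forall>X\<in>A. M \<subseteq> X \<longrightarrow> X = M"
    using subset_Zorn_nonempty[of A] by blast
  have "J = M \<or> J = UNIV" if "ideal.subspace J" "M \<subseteq> J" for J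
  proof (cases "1 \<in> J")
    case True
    then have "x * 1 \<in> J" for x
      using ideal.subspace_scale[OF \<open>ideal.subspace J\<close>] by blast
    then show ?thesis
      by auto
  next
    case False
    then show ?thesis
      using that M maximal unfolding A_def by blast
  qed
  then show ?thesis
    using M unfolding A_def maximal_ideal_def is_ideal_iff_subspace by blast
qed

lemma local_ring_one_minus_mult_unit:
  fixes a :: "'a::comm_ring_1"
  assumes "local_ring TYPE('a)" and "\<not> a dvd 1"
  shows "(1 - a * c) dvd 1"
proof (rule ccontr)
  assume "\<not> (1 - a * c) dvd 1"
  then obtain M' where M': "maximal_ideal M'" "1 - a * c \<in> M'"
    using ex_maximal_ideal_mem by blast
  obtain M where M: "maximal_ideal M" "a \<in> M"
    using ex_maximal_ideal_mem assms(2) by blast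
  have "M' = M"
    using assms(1) M M' unfolding local_ring_def by blast
  then have "ideal.subspace M" "1 - a * c \<in> M" "1 \<notin> M"
    using M M' unfolding maximal_ideal_def is_ideal_iff_subspace by auto
  moreover have "c * a \<in> M"
    using M(2) ideal.subspace_scale[OF \<open>ideal.subspace M\<close>] by blast
  ultimately have "(1 - a * c) + c * a \<in> M"
    using ideal.subspace_add by blast
  with \<open>1 \<notin> M\<close> show False
    by (simp add: mult.commute)
qed

lemma maximal_ideal_mem_if_dvd:
  fixes b :: "'a::comm_ring_1"
  assumes P: "maximal_ideal P" and "\<not> b dvd 1" and dvd: "\<And>p. p \<in> P \<Longrightarrow> b dvd p"
  shows "b \<in> P"
proof -
  let ?J = "ideal.span (insert b P)"
  have "ideal.subspace P"
    using P unfolding maximal_ideal_def is_ideal_iff_subspace by blast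
  have "1 \<notin> ?J"
  proof
    assume "1 \<in> ?J"
    moreover have "ideal.span P = P"
      using \<open>ideal.subspace P\<close> by simp
    ultimately obtain k where "1 - k * b \<in> P"
      by (auto simp: ideal.span_breakdown_eq)
    then have "b dvd (1 - k * b) + k * b"
      using dvd by (intro dvd_add) auto
    with \<open>\<not> b dvd 1\<close> show False
      by simp
  qed
  moreover have "P \<subseteq> ?J"
    using ideal.span_superset by blast
  ultimately have "?J = P"
    using P unfolding maximal_ideal_def is_ideal_iff_subspace by blast
  then show ?thesis
    using ideal.span_base[of b "insert b P"] by simp
qed

lemma prime_ideal_multiples_of_powers:
  fixes b :: "'a::idom"
  assumes val: "valuation_domain TYPE('a)" and "b \<noteq> 0" "\<not> b dvd 1"
  shows "prime_ideal {x. \<forall>n. b ^ n dvd x}"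
proof -
  have "x \<in> {x. \<forall>n. b ^ n dvd x} \<or> y \<in> {x. \<forall>n. b ^ n dvd x}" if xy: "\<forall>n. b ^ n dvd x * y" for x y
  proof (rule ccontr)
    assume "\<not> ?thesis"
    then obtain i j where "\<not> b ^ i dvd x" "\<not> b ^ j dvd y"
      by auto
    then have "x * y dvd b ^ i * b ^ j"
      using val unfolding valuation_domain_def by (blast intro: mult_dvd_mono)
    moreover have "b ^ (i + j) * b dvd x * y"
      using xy power_Suc2 by metis
    ultimately have "b ^ (i + j) * b dvd b ^ (i + j) * 1"
      by (simp add: power_add dvd_trans)
    with assms(2,3) show False
      by (subst (asm) dvd_mult_cancel_left) auto
  qed
  moreover have "1 \<notin> {x. \<forall>n. b ^ n dvd x}"
    using assms(3) by (auto intro!: exI[of _ 1])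
  ultimately show ?thesis
    unfolding prime_ideal_def is_ideal_def by auto
qed

lemma archimedean_dvd_power:
  fixes a b :: "'a::idom"
  assumes arch: "archimedean_valuation_domain TYPE('a)" and "a \<noteq> 0" "\<not> b dvd 1"
  shows "\<exists>n. a dvd b ^ n"
proof (rule ccontr)
  assume none: "\<nexists>n. a dvd b ^ n"
  have "b \<noteq> 0"
  proof
    assume "b = 0"
    then have "a dvd b ^ 1"
      by simp
    with none show False
      by blast
  qed
  define P where "P = {x. \<forall>n. b ^ n dvd x}"
  have "a \<in> P"
    using none arch unfolding P_def archimedean_valuation_domain_def valuation_domain_def by blast
  moreover have "prime_ideal P"
    using arch prime_ideal_multiples_of_powers \<open>b \<noteq> 0\<close> assms(3)
    unfolding P_def archimedean_valuation_domain_def by blast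
  ultimately have "maximal_ideal P"
    using arch \<open>a \<noteq> 0\<close> unfolding archimedean_valuation_domain_def by blast
  moreover have "b dvd p" if "p \<in> P" for p
    using that power_one_right[of b] unfolding P_def by (metis mem_Collect_eq)
  ultimately have "b \<in> P"
    using maximal_ideal_mem_if_dvd assms(3) by blast
  then have "b ^ 2 dvd b"
    unfolding P_def by blast
  then have "b * b dvd b * 1"
    by (simp add: power2_eq_square)
  with \<open>b \<noteq> 0\<close> assms(3) show False
    by (subst (asm) dvd_mult_cancel_left) auto
qed

context module
begin

lemma divisible_if_torsion_free:
  assumes "torsion_free scale" and sq: "\<And>a. range (scale a) = range (scale (a ^ 2))"
  shows "divisible scale"
  unfolding divisible_def divisible_on_def
proof (intro allI impI)
  fix s :: 'a
  assume "s \<noteq> 0"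
  have "x \<in> range (scale s)" for x
  proof -
    obtain y where "s *s x = (s ^ 2) *s y"
      using sq by (metis rangeE rangeI)
    then have "s *s (x - s *s y) = 0"
      by (simp add: scale_right_diff_distrib power2_eq_square)
    then have "x - s *s y = 0"
      using \<open>torsion_free scale\<close> \<open>s \<noteq> 0\<close> unfolding torsion_free_def by blast
    then have "x = s *s y"
      by simp
    then show ?thesis
      by blast
  qed
  then show "scale s ` UNIV = UNIV"
    by blast
qed

lemma semisimple_if_local_ring_fin_gen:
  assumes "local_ring TYPE('a)" and "fin_gen scale"
    and "\<And>a. range (scale a) = range (scale (a ^ 2))"
  shows "semisimple scale"
proof (rule semisimple_if_nonunits_annihilate)
  fix a :: 'a and x
  assume "\<not> a dvd 1"
  obtain F where "finite F" "span F = UNIV"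
    using assms(2) unfolding fin_gen_def by blast
  then show "a *s x = 0"
    using scale_eq_0_if_jacobson local_ring_one_minus_mult_unit[OF assms(1) \<open>\<not> a dvd 1\<close>] assms(3)
    by metis
qed

lemma image_scale_unit:
  assumes "s dvd 1" and "subspace D"
  shows "scale s ` D = D"
proof
  show "scale s ` D \<subseteq> D"
    using assms(2) subspace_scale by blast
  obtain t where "1 = s * t"
    using assms(1) by (auto elim: dvdE)
  then have "x = s *s (t *s x)" for x
    by simp
  then show "D \<subseteq> scale s ` D"
    using assms(2) subspace_scale by blast
qed

lemma subspace_range_scale: "subspace (range (scale m))"
  using module_hom.subspace_image[OF module_hom_scale_self subspace_UNIV] .

end

lemma archimedean_range_scale_eq:
  fixes scale :: "'a::idom \<Rightarrow> 'b::ab_group_add \<Rightarrow> 'b"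
  assumes "module scale" and arch: "archimedean_valuation_domain TYPE('a)"
    and sq: "\<And>a. range (scale a) = range (scale (a ^ 2))"
    and "a \<noteq> 0" "\<not> a dvd 1" "b \<noteq> 0" "\<not> b dvd 1"
  shows "range (scale a) = range (scale b)"
proof -
  interpret module scale by fact
  obtain i j where "a dvd b ^ i" "b dvd a ^ j"
    using archimedean_dvd_power[OF arch] assms(4-7) by metis
  then show ?thesis
    using range_scale_subset_if_dvd_power[OF sq] by blast
qed

lemma divisible_on_range_scale:
  fixes scale :: "'a::idom \<Rightarrow> 'b::ab_group_add \<Rightarrow> 'b"
  assumes "module scale" and "m \<noteq> 0"
    and same_range: "\<And>a. a \<noteq> 0 \<Longrightarrow> \<not> a dvd 1 \<Longrightarrow> range (scale a) = range (scale m)"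
  shows "divisible_on scale (range (scale m))"
  unfolding divisible_on_def
proof (intro allI impI)
  interpret module scale by fact
  fix s :: 'a
  assume "s \<noteq> 0"
  show "scale s ` range (scale m) = range (scale m)"
  proof (cases "s dvd 1")
    case True
    then show ?thesis
      using image_scale_unit subspace_range_scale by blast
  next
    case False
    then have "\<not> s * m dvd 1"
      using dvd_mult_left by blast
    moreover have "scale s ` range (scale m) = range (scale (s * m))"
      by (simp add: range_scale_mult)
    ultimately show ?thesis
      using same_range \<open>s \<noteq> 0\<close> \<open>m \<noteq> 0\<close> by simp
  qed
qed

lemma archimedean_ex_divisible_semisimple_quotient:
  fixes scale :: "'a::idom \<Rightarrow> 'b::ab_group_add \<Rightarrow> 'b"
  assumes "module scale" and arch: "archimedean_valuation_domain TYPE('a)"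
    and sq: "\<And>a. range (scale a) = range (scale (a ^ 2))"
  shows "\<exists>D. submodule scale D \<and> divisible_on scale D \<and> semisimple_quotient scale D"
proof -
  interpret module scale by fact
  show ?thesis
  proof (cases "\<exists>m::'a. m \<noteq> 0 \<and> \<not> m dvd 1")
    case False
    then have "scale s ` UNIV = UNIV" if "s \<noteq> 0" for s
      using image_scale_unit[OF _ subspace_UNIV] that by blast
    then have "divisible_on scale UNIV"
      unfolding divisible_on_def by blast
    moreover have "semisimple_quotient scale UNIV"
      by (rule semisimple_quotient_if_nonunits_into) simp_all
    ultimately show ?thesis
      unfolding submodule_def using subspace_UNIV by blast
  next
    case True
    then obtain m :: 'a where m: "m \<noteq> 0" "\<not> m dvd 1"
      by blast
    have same_range: "range (scale a) = range (scale m)" if "a \<noteq> 0" "\<not> a dvd 1" for a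
      using archimedean_range_scale_eq[OF assms that m] .
    have "scale a x \<in> range (scale m)" if "\<not> a dvd 1" for a x
      using same_range[OF _ that] subspace_0[OF subspace_range_scale] by (cases "a = 0") auto
    then have "semisimple_quotient scale (range (scale m))"
      using semisimple_quotient_if_nonunits_into subspace_range_scale by blast
    moreover have "divisible_on scale (range (scale m))"
      using divisible_on_range_scale[OF assms(1) m(1) same_range] .
    ultimately show ?thesis
      unfolding submodule_def using subspace_range_scale by blast
  qed
qed

theorem proposition2p4:
  fixes scale :: "'a::idom \<Rightarrow> 'b::ab_group_add \<Rightarrow> 'b"
  assumes "module scale"
    and "\<And>a. range (scale a) = range (scale (a ^ 2))"
  shows "(torsion_free scale \<longrightarrow> divisible scale) \<and>
         (local_ring TYPE('a) \<and> fin_gen scale \<longrightarrow> semisimple scale) \<and>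
         (archimedean_valuation_domain TYPE('a) \<longrightarrow>
           (\<exists>D. submodule scale D \<and> divisible_on scale D \<and> semisimple_quotient scale D))"
  using module.divisible_if_torsion_free[OF assms(1) _ assms(2)]
    module.semisimple_if_local_ring_fin_gen[OF assms(1) _ _ assms(2)]
    archimedean_ex_divisible_semisimple_quotient[OF assms(1) _ assms(2)]
  by blast

end
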